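(* Let $f,g:\{0,1,\dots,n\}\to\mathbb{R}$ be given as arrays, where $f$ is concave and $g$ is oscillating concave. Then the (max,+) convolution $h(k)=\max_{1\le i\le k}\bigl(f(i)+g(k-i)\bigr)$ for $1\le k\le n$ can be computed for all $k$ in $O(n)$ total time.
   Context: $f$ is concave if $f(i+1)-f(i)$ is non-increasing in $i$. A function $g$ is oscillating concave if for all $k$ (whenever the arguments lie in the domain): (1) $g(2k)-g(2k-2)\ge g(2k+2)-g(2k)$; (2) $g(2k+2)-g(2k+1)\ge g(2k+1)-g(2k)$; (3) $g(2k+1)-g(2k)\le g(2k)-g(2k-1)$; (4) $g(2k+1)-g(2k)$ is (weakly) decreasing in $k$; (5) $g(2k)-g(2k-1)$ is (weakly) decreasing in $k$. Arithmetic and comparisons of values take $O(1)$ time. *)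

theory Defs
  imports Complex_Main
begin

definition concave_arr :: "nat \<Rightarrow> (nat \<Rightarrow> real) \<Rightarrow> bool" where
  "concave_arr n f \<longleftrightarrow> (\<forall>i. i + 2 \<le> n \<longrightarrow> f (i+2) - f (i+1) \<le> f (i+1) - f i)"

text \<open>g : {0..n} -> R is oscillating concave (conditions (1)-(5), whenever all
  arguments lie in {0..n}).\<close>
definition osc_concave_arr :: "nat \<Rightarrow> (nat \<Rightarrow> real) \<Rightarrow> bool" where
  "osc_concave_arr n g \<longleftrightarrow>
     (\<forall>k. 1 \<le> k \<and> 2*k+2 \<le> n \<longrightarrow> g (2*k) - g (2*k-2) \<ge> g (2*k+2) - g (2*k)) \<and>
     (\<forall>k. 2*k+2 \<le> n \<longrightarrow> g (2*k+2) - g (2*k+1) \<ge> g (2*k+1) - g (2*k)) \<and>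
     (\<forall>k. 1 \<le> k \<and> 2*k+1 \<le> n \<longrightarrow> g (2*k+1) - g (2*k) \<le> g (2*k) - g (2*k-1)) \<and>
     (\<forall>k. 2*k+3 \<le> n \<longrightarrow> g (2*(k+1)+1) - g (2*(k+1)) \<le> g (2*k+1) - g (2*k)) \<and>
     (\<forall>k. 1 \<le> k \<and> 2*k+2 \<le> n \<longrightarrow> g (2*(k+1)) - g (2*(k+1)-1) \<le> g (2*k) - g (2*k-1))"

definition maxplus_conv :: "(nat \<Rightarrow> real) \<Rightarrow> (nat \<Rightarrow> real) \<Rightarrow> nat \<Rightarrow> real" where
  "maxplus_conv f g k = Max ((\<lambda>i. f i + g (k - i)) ` {1..k})"

text \<open>There is no nat multiplication/division and no conversion real -> nat.\<close>

record mstate =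
  nr :: "nat \<Rightarrow> nat"
  rr :: "nat \<Rightarrow> real"
  outp :: "nat \<Rightarrow> real"

datatype instr =
    NConst nat nat
  | NAdd nat nat nat
  | NSub nat nat nat
  | NLoad nat nat
  | NStore nat nat
  | RAdd nat nat nat
  | RSub nat nat nat
  | RLoad nat nat
  | RStore nat nat
  | ReadF nat nat
  | ReadG nat nat
  | WriteOut nat nat

datatype test =
    NLess nat nat
  | NEq nat nat
  | RLe nat nat

datatype prog =
    Skip
  | Instr instr
  | Seq prog prog
  | If test prog prog
  | While test prog

fun step_instr :: "(nat \<Rightarrow> real) \<Rightarrow> (nat \<Rightarrow> real) \<Rightarrow> instr \<Rightarrow> mstate \<Rightarrow> mstate" where
  "step_instr f g (NConst x c) s = s\<lparr>nr := (nr s)(x := c)\<rparr>"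
| "step_instr f g (NAdd x y z) s = s\<lparr>nr := (nr s)(x := nr s y + nr s z)\<rparr>"
| "step_instr f g (NSub x y z) s = s\<lparr>nr := (nr s)(x := nr s y - nr s z)\<rparr>"
| "step_instr f g (NLoad x y) s = s\<lparr>nr := (nr s)(x := nr s (nr s y))\<rparr>"
| "step_instr f g (NStore x y) s = s\<lparr>nr := (nr s)(nr s x := nr s y)\<rparr>"
| "step_instr f g (RAdd x y z) s = s\<lparr>rr := (rr s)(x := rr s y + rr s z)\<rparr>"
| "step_instr f g (RSub x y z) s = s\<lparr>rr := (rr s)(x := rr s y - rr s z)\<rparr>"
| "step_instr f g (RLoad x y) s = s\<lparr>rr := (rr s)(x := rr s (nr s y))\<rparr>"
| "step_instr f g (RStore x y) s = s\<lparr>rr := (rr s)(nr s x := rr s y)\<rparr>"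
| "step_instr f g (ReadF x y) s = s\<lparr>rr := (rr s)(x := f (nr s y))\<rparr>"
| "step_instr f g (ReadG x y) s = s\<lparr>rr := (rr s)(x := g (nr s y))\<rparr>"
| "step_instr f g (WriteOut x y) s = s\<lparr>outp := (outp s)(nr s x := rr s y)\<rparr>"

fun eval_test :: "test \<Rightarrow> mstate \<Rightarrow> bool" where
  "eval_test (NLess x y) s = (nr s x < nr s y)"
| "eval_test (NEq x y) s = (nr s x = nr s y)"
| "eval_test (RLe x y) s = (rr s x \<le> rr s y)"

inductive exec :: "(nat \<Rightarrow> real) \<Rightarrow> (nat \<Rightarrow> real) \<Rightarrow> prog \<Rightarrow> mstate \<Rightarrow> nat \<Rightarrow> mstate \<Rightarrow> bool"
  for f g where
  exec_Skip: "exec f g Skip s 0 s"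
| exec_Instr: "exec f g (Instr i) s 1 (step_instr f g i s)"
| exec_Seq: "exec f g p s t1 s1 \<Longrightarrow> exec f g q s1 t2 s2 \<Longrightarrow> exec f g (Seq p q) s (t1 + t2) s2"
| exec_IfT: "eval_test b s \<Longrightarrow> exec f g p s t s' \<Longrightarrow> exec f g (If b p q) s (t + 1) s'"
| exec_IfF: "\<not> eval_test b s \<Longrightarrow> exec f g q s t s' \<Longrightarrow> exec f g (If b p q) s (t + 1) s'"
| exec_WhileF: "\<not> eval_test b s \<Longrightarrow> exec f g (While b p) s 1 s"
| exec_WhileT: "eval_test b s \<Longrightarrow> exec f g p s t1 s1 \<Longrightarrow> exec f g (While b p) s1 t2 s2
                 \<Longrightarrow> exec f g (While b p) s (t1 + t2 + 1) s2"

definition init_state :: "nat \<Rightarrow> mstate" where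
  "init_state n = \<lparr>nr = (\<lambda>_. 0)(0 := n), rr = (\<lambda>_. 0), outp = (\<lambda>_. 0)\<rparr>"

end

theory Submission
  imports Defs
begin

text \<open>Split the convolution according to the parities of i and k - i. Inside one parity class
  the summands are f (p + 2u) + g (c + 2v) with p \<in> {1, 2} and c \<in> {0, 1}, and both
  u \<mapsto> f (p + 2u) and v \<mapsto> g (c + 2v) are concave; for g this follows from oscillating
  concavity. The max-plus convolution of two concave sequences is produced by the greedy
  merge that always advances the sequence with the larger next increment (an exchange argument
  shows that the current pair is optimal), at constant cost per output. Four such merges, two
  storing the maxima of the class c = 1 in memory and two combining them with those of the class
  c = 0, compute all h k in O(n) steps.\<close>

section \<open>Concave sequences and the greedy merge\<close>

lemma concave_arr_diff_antimono:
  assumes "concave_arr N F" "i \<le> j" "j + 1 \<le> N"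
  shows "F (j + 1) - F j \<le> F (i + 1) - F i"
  using assms(2,3)
proof (induction j rule: dec_induct)
  case base
  then show ?case by simp
next
  case (step j)
  then have "F (j + 2) - F (j + 1) \<le> F (j + 1) - F j"
    using assms(1) unfolding concave_arr_def by simp
  with step show ?case by simp
qed

lemma concave_arr_increase_le:
  assumes "concave_arr N F" "u + j \<le> N"
  shows "F (u + j) - F u \<le> real j * (F (u + 1) - F u)"
proof -
  have "F (u + j) - F u = (\<Sum>t<j. F (u + Suc t) - F (u + t))"
    using sum_lessThan_telescope[of "\<lambda>t. F (u + t)" j] by simp
  also have "\<dots> \<le> (\<Sum>t<j. F (u + 1) - F u)"
  proof (rule sum_mono)
    fix t assume "t \<in> {..<j}"
    then show "F (u + Suc t) - F (u + t) \<le> F (u + 1) - F u"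
      using assms concave_arr_diff_antimono[of N F u "u + t"] by simp
  qed
  finally show ?thesis by simp
qed

lemma concave_arr_increase_ge:
  assumes "concave_arr N F" "u + j \<le> N" "0 < j"
  shows "real j * (F (u + j) - F (u + j - 1)) \<le> F (u + j) - F u"
proof -
  have "real j * (F (u + j) - F (u + j - 1)) = (\<Sum>t<j. F (u + j) - F (u + j - 1))"
    by simp
  also have "\<dots> \<le> (\<Sum>t<j. F (u + Suc t) - F (u + t))"
  proof (rule sum_mono)
    fix t assume "t \<in> {..<j}"
    then show "F (u + j) - F (u + j - 1) \<le> F (u + Suc t) - F (u + t)"
      using assms concave_arr_diff_antimono[of N F "u + t" "u + j - 1"] by simp
  qed
  also have "\<dots> = F (u + j) - F u"
    using sum_lessThan_telescope[of "\<lambda>t. F (u + t)" j] by simp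
  finally show ?thesis .
qed

lemma concave_arr_exchange:
  assumes F: "concave_arr N F" and G: "concave_arr N G" and "u + j \<le> N" "w + j \<le> N"
    and slope: "F (u + 1) - F u \<le> G (w + j) - G (w + j - 1)"
  shows "F (u + j) + G w \<le> F u + G (w + j)"
proof (cases "j = 0")
  case False
  have "F (u + j) - F u \<le> real j * (F (u + 1) - F u)"
    using concave_arr_increase_le[OF F] assms by simp
  also have "\<dots> \<le> real j * (G (w + j) - G (w + j - 1))"
    using slope by (simp add: mult_left_mono)
  also have "\<dots> \<le> G (w + j) - G w"
    using concave_arr_increase_ge[OF G] assms False by simp
  finally show ?thesis by simp
qed simp

text \<open>Every increment already taken from one sequence is at least the pending increment of
  the other one.\<close>
definition merge_inv :: "(nat \<Rightarrow> real) \<Rightarrow> (nat \<Rightarrow> real) \<Rightarrow> nat \<Rightarrow> nat \<Rightarrow> bool" where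
  "merge_inv F G u v \<longleftrightarrow>
     (0 < u \<longrightarrow> G (v + 1) - G v \<le> F u - F (u - 1)) \<and>
     (0 < v \<longrightarrow> F (u + 1) - F u \<le> G v - G (v - 1))"

lemma merge_inv_0: "merge_inv F G 0 0"
  by (simp add: merge_inv_def)

lemma merge_inv_step:
  assumes F: "concave_arr N F" and G: "concave_arr N G" and "u + v + 1 \<le> N"
    and inv: "merge_inv F G u v"
  shows "merge_inv F G (if G (v + 1) - G v \<le> F (u + 1) - F u then u + 1 else u)
                       (if G (v + 1) - G v \<le> F (u + 1) - F u then v else v + 1)"
proof (cases "G (v + 1) - G v \<le> F (u + 1) - F u")
  case True
  have "F (u + 2) - F (u + 1) \<le> F (u + 1) - F u" if "0 < v"
    using F that \<open>u + v + 1 \<le> N\<close> unfolding concave_arr_def by simp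
  with True inv show ?thesis
    unfolding merge_inv_def by (auto simp: add.commute[of 1])
next
  case False
  have "G (v + 2) - G (v + 1) \<le> G (v + 1) - G v" if "0 < u"
    using G that \<open>u + v + 1 \<le> N\<close> unfolding concave_arr_def by simp
  with False inv show ?thesis
    unfolding merge_inv_def by (auto simp: add.commute[of 1])
qed

lemma merge_inv_max:
  assumes F: "concave_arr (u + v) F" and G: "concave_arr (u + v) G"
    and inv: "merge_inv F G u v" and "a + b = u + v"
  shows "F a + G b \<le> F u + G v"
proof (cases "u \<le> a")
  case True
  define j where "j = a - u"
  have "a = u + j" "v = b + j" using True \<open>a + b = u + v\<close> by (simp_all add: j_def)
  moreover have "F (u + 1) - F u \<le> G (b + j) - G (b + j - 1)" if "0 < j"
    using inv that \<open>v = b + j\<close> unfolding merge_inv_def by simp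
  ultimately show ?thesis
    using concave_arr_exchange[OF F G, of u j b] by (cases "j = 0") auto
next
  case False
  define j where "j = u - a"
  have "u = a + j" "b = v + j" "0 < j" using False \<open>a + b = u + v\<close> by (simp_all add: j_def)
  moreover have "G (v + 1) - G v \<le> F (a + j) - F (a + j - 1)"
    using inv \<open>u = a + j\<close> \<open>0 < j\<close> unfolding merge_inv_def by simp
  ultimately show ?thesis
    using concave_arr_exchange[OF G F, of v j a] by auto
qed

section \<open>Parity classes\<close>

definition concave2_arr :: "nat \<Rightarrow> (nat \<Rightarrow> real) \<Rightarrow> bool" where
  "concave2_arr n f \<longleftrightarrow> (\<forall>w. w + 4 \<le> n \<longrightarrow> f (w + 4) - f (w + 2) \<le> f (w + 2) - f w)"

lemma concave2_arr_subseq: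
  assumes "concave2_arr n f" "p + 2 * N \<le> n"
  shows "concave_arr N (\<lambda>u. f (p + 2 * u))"
  unfolding concave_arr_def
proof (intro allI impI)
  fix i assume "i + 2 \<le> N"
  then have "p + 2 * i + 4 \<le> n" using assms(2) by simp
  moreover have "p + 2 * (i + 2) = p + 2 * i + 4" "p + 2 * (i + 1) = p + 2 * i + 2" by simp_all
  ultimately show "f (p + 2 * (i + 2)) - f (p + 2 * (i + 1)) \<le> f (p + 2 * (i + 1)) - f (p + 2 * i)"
    using assms(1) unfolding concave2_arr_def by presburger
qed

lemma concave_arr_imp_concave2_arr:
  assumes "concave_arr n f"
  shows "concave2_arr n f"
  unfolding concave2_arr_def
proof (intro allI impI)
  fix w assume "w + 4 \<le> n"
  have "f (i + 2) - f (i + 1) \<le> f (i + 1) - f i" if "i + 2 \<le> n" for i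
    using assms that unfolding concave_arr_def by blast
  from this[of w] this[of "w + 1"] this[of "w + 2"] \<open>w + 4 \<le> n\<close>
  show "f (w + 4) - f (w + 2) \<le> f (w + 2) - f w"
    by (simp add: numeral_eq_Suc)
qed

text \<open>Along even arguments this is condition (1); along odd arguments it follows from (4)
  and (5).\<close>
lemma osc_concave_arr_imp_concave2_arr:
  assumes "osc_concave_arr n g"
  shows "concave2_arr n g"
  unfolding concave2_arr_def
proof (intro allI impI)
  fix w assume "w + 4 \<le> n"
  show "g (w + 4) - g (w + 2) \<le> g (w + 2) - g w"
  proof (cases "even w")
    case True
    then obtain m where "w = 2 * m" by blast
    then show ?thesis
      using assms \<open>w + 4 \<le> n\<close> unfolding osc_concave_arr_def
      by (auto dest!: spec[of _ "m + 1"] simp: numeral_eq_Suc)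
  next
    case False
    then obtain m where "w = 2 * m + 1" using oddE by blast
    then have "g (w + 4) - g (w + 3) \<le> g (w + 2) - g (w + 1)"
      and "g (w + 3) - g (w + 2) \<le> g (w + 1) - g w"
      using assms \<open>w + 4 \<le> n\<close> unfolding osc_concave_arr_def
      by (auto dest!: spec[of _ "m + 1"] simp: numeral_eq_Suc)
    then show ?thesis by simp
  qed
qed

definition parity_conv :: "(nat \<Rightarrow> real) \<Rightarrow> (nat \<Rightarrow> real) \<Rightarrow> nat \<Rightarrow> nat \<Rightarrow> real" where
  "parity_conv f g c k = Max ((\<lambda>i. f i + g (k - i)) ` {i \<in> {1..k}. (k - i) mod 2 = c})"

lemma parity_conv_eqI:
  assumes "p \<in> {1, 2}" "c \<in> {0, 1}"
    and max: "\<And>a b. a + b = u + v \<Longrightarrow> f (p + 2 * a) + g (c + 2 * b) \<le> f (p + 2 * u) + g (c + 2 * v)"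
  shows "parity_conv f g c (p + 2 * u + (c + 2 * v)) = f (p + 2 * u) + g (c + 2 * v)"
  unfolding parity_conv_def
proof (rule Max_eqI)
  let ?k = "p + 2 * u + (c + 2 * v)"
  show "f (p + 2 * u) + g (c + 2 * v) \<in> (\<lambda>i. f i + g (?k - i)) ` {i \<in> {1..?k}. (?k - i) mod 2 = c}"
    using assms(1,2) by (intro image_eqI[where x = "p + 2 * u"]) auto
  fix r assume "r \<in> (\<lambda>i. f i + g (?k - i)) ` {i \<in> {1..?k}. (?k - i) mod 2 = c}"
  then obtain i where r: "r = f i + g (?k - i)" and i: "1 \<le> i" "i \<le> ?k" "(?k - i) mod 2 = c"
    by auto
  define b where "b = (?k - i) div 2"
  have b: "?k - i = c + 2 * b"
    using i(3) unfolding b_def by (metis div_mult_mod_eq add.commute mult.commute)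
  moreover have "p \<le> 2" using assms(1) by auto
  ultimately have "b \<le> u + v" using i(1,2) by linarith
  define a where "a = u + v - b"
  have a: "i = p + 2 * a" "a + b = u + v"
    using b i(2) \<open>b \<le> u + v\<close> unfolding a_def by linarith+
  show "r \<le> f (p + 2 * u) + g (c + 2 * v)"
    using max[OF a(2)] r a(1) b by simp
qed simp

lemma maxplus_conv_parity_split:
  assumes "2 \<le> k"
  shows "maxplus_conv f g k = max (parity_conv f g 0 k) (parity_conv f g 1 k)"
proof -
  let ?h = "\<lambda>i. f i + g (k - i)"
  let ?S = "\<lambda>c. {i \<in> {1..k}. (k - i) mod 2 = c}"
  have "{1..k} = ?S 0 \<union> ?S 1" by auto
  then have "maxplus_conv f g k = Max (?h ` ?S 0 \<union> ?h ` ?S 1)"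
    unfolding maxplus_conv_def image_Un[symmetric] by (simp only:)
  moreover have "k \<in> ?S 0" "k - 1 \<in> ?S 1" using assms by auto
  then have "?S 0 \<noteq> {}" "?S 1 \<noteq> {}" by (metis empty_iff)+
  then have "Max (?h ` ?S 0 \<union> ?h ` ?S 1) = max (Max (?h ` ?S 0)) (Max (?h ` ?S 1))"
    by (intro Max_Un) simp_all
  ultimately show ?thesis unfolding parity_conv_def by simp
qed

lemma maxplus_conv_1: "maxplus_conv f g 1 = f 1 + g 0"
  and parity_conv_0_1: "parity_conv f g 0 1 = f 1 + g 0"
proof -
  have "{i \<in> {1..1}. (1 - i) mod 2 = (0::nat)} = {1}" by auto
  then show "maxplus_conv f g 1 = f 1 + g 0" "parity_conv f g 0 1 = f 1 + g 0"
    unfolding maxplus_conv_def parity_conv_def by simp_all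
qed

section \<open>Loop-free programs and loops\<close>

fun final :: "(nat \<Rightarrow> real) \<Rightarrow> (nat \<Rightarrow> real) \<Rightarrow> prog \<Rightarrow> mstate \<Rightarrow> mstate" where
  "final f g (Instr i) s = step_instr f g i s"
| "final f g (Seq p q) s = final f g q (final f g p s)"
| "final f g (If b p q) s = (if eval_test b s then final f g p s else final f g q s)"
| "final f g _ s = s"

fun cost :: "(nat \<Rightarrow> real) \<Rightarrow> (nat \<Rightarrow> real) \<Rightarrow> prog \<Rightarrow> mstate \<Rightarrow> nat" where
  "cost f g (Instr i) s = 1"
| "cost f g (Seq p q) s = cost f g p s + cost f g q (final f g p s)"
| "cost f g (If b p q) s = (if eval_test b s then cost f g p s else cost f g q s) + 1"
| "cost f g _ s = 0"

fun loop_free :: "prog \<Rightarrow> bool" where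
  "loop_free (Seq p q) = (loop_free p \<and> loop_free q)"
| "loop_free (If b p q) = (loop_free p \<and> loop_free q)"
| "loop_free (While b p) = False"
| "loop_free _ = True"

lemma exec_final:
  assumes "loop_free p"
  shows "exec f g p s (cost f g p s) (final f g p s)"
  using assms
proof (induction p arbitrary: s)
  case (If b p q)
  then show ?case
    using exec_IfT[of b s f g p] exec_IfF[of b s f g q] by auto
next
  case (Instr i)
  show ?case using exec_Instr[of f g i s] by simp
qed (auto intro: exec.intros)

fun straight :: "instr list \<Rightarrow> prog" where
  "straight [] = Skip"
| "straight (i # is) = Seq (Instr i) (straight is)"

lemma loop_free_straight [simp]: "loop_free (straight is)"
  by (induction "is") auto

lemma exec_While_variant:
  fixes I :: "mstate \<Rightarrow> bool" and \<mu> :: "mstate \<Rightarrow> nat"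
  assumes step: "\<And>s. I s \<Longrightarrow> eval_test b s \<Longrightarrow>
                   \<exists>t s'. exec f g p s t s' \<and> I s' \<and> t \<le> T \<and> \<mu> s' < \<mu> s"
    and "I s"
  shows "\<exists>t s'. exec f g (While b p) s t s' \<and> I s' \<and> \<not> eval_test b s' \<and> t \<le> (T + 1) * \<mu> s + 1"
  using \<open>I s\<close>
proof (induction "\<mu> s" arbitrary: s rule: less_induct)
  case less
  show ?case
  proof (cases "eval_test b s")
    case False
    then show ?thesis using less.prems exec_WhileF by fastforce
  next
    case True
    obtain t1 s1 where 1: "exec f g p s t1 s1" "I s1" "t1 \<le> T" "\<mu> s1 < \<mu> s"
      using step[OF less.prems True] by blast
    obtain t2 s2 where 2: "exec f g (While b p) s1 t2 s2" "I s2" "\<not> eval_test b s2"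
        "t2 \<le> (T + 1) * \<mu> s1 + 1"
      using less.hyps[OF 1(4) 1(2)] by blast
    have "(T + 1) * (\<mu> s1 + 1) \<le> (T + 1) * \<mu> s"
      using 1(4) by (intro mult_le_mono2) simp
    then have "t1 + t2 + 1 \<le> (T + 1) * \<mu> s + 1"
      using 1(3) 2(4) by (simp add: algebra_simps)
    then show ?thesis using exec_WhileT[OF True 1(1) 2(1)] 2 by blast
  qed
qed

section \<open>The merge loop\<close>

text \<open>Registers: nr 0 = n, nr 1 = k = x + y, nr 2 = x, nr 3 = y, nr 4 = 2, nr 5 = n + 1,
  nr 6 = k + 100, nr 7 = 100, and nr 8 to nr 10 are scratch. The body sets rr 2 = f x + g y,
  hands it to emit, then compares the next increments rr 5 of f and rr 6 of g. The cells
  rr (k + 100) hold the maxima of the class c = 1.\<close>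
definition body :: "prog \<Rightarrow> prog" where
  "body emit = Seq (straight [ReadF 0 2, ReadG 1 3, RAdd 2 0 1, NAdd 6 1 7])
     (Seq emit (Seq (straight [NAdd 8 2 4, NAdd 9 3 4, ReadF 3 8, ReadG 4 9, RSub 5 3 0, RSub 6 4 1])
       (Seq (If (RLe 6 5) (Instr (NAdd 2 2 4)) (Instr (NAdd 3 3 4))) (Instr (NAdd 1 1 4)))))"

definition emit_store :: prog where
  "emit_store = Instr (RStore 6 2)"

definition emit_out :: prog where
  "emit_out = Seq (Instr (RLoad 7 6)) (If (RLe 7 2) (Instr (WriteOut 1 2)) (Instr (WriteOut 1 7)))"

definition chain_init :: "nat \<Rightarrow> nat \<Rightarrow> prog" where
  "chain_init p c = straight [NConst 4 2, NConst 10 1, NAdd 5 0 10, NConst 7 100,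
                              NConst 1 (p + c), NConst 2 p, NConst 3 c]"

definition chain :: "nat \<Rightarrow> nat \<Rightarrow> prog \<Rightarrow> prog" where
  "chain p c emit = Seq (chain_init p c) (While (NLess 1 5) (body emit))"

lemma final_chain_init:
  fixes f g :: "nat \<Rightarrow> real" and p c :: nat and s :: mstate
  defines "s' \<equiv> final f g (chain_init p c) s"
  shows "cost f g (chain_init p c) s = 7"
    and "nr s' 0 = nr s 0" "nr s' 1 = p + c" "nr s' 2 = p" "nr s' 3 = c"
    and "nr s' 4 = 2" "nr s' 5 = nr s 0 + 1" "nr s' 7 = 100"
    and "rr s' = rr s" "outp s' = outp s"
  unfolding s'_def by (simp_all add: chain_init_def)

lemma final_emit_store:
  "nr (final f g emit_store s) = nr s"
    "i < 2 \<Longrightarrow> 2 \<le> nr s 6 \<Longrightarrow> rr (final f g emit_store s) i = rr s i"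
    "cost f g emit_store s \<le> 3"
  by (auto simp: emit_store_def)

lemma final_emit_out:
  "nr (final f g emit_out s) = nr s"
    "i < 2 \<Longrightarrow> 2 \<le> nr s 6 \<Longrightarrow> rr (final f g emit_out s) i = rr s i"
    "cost f g emit_out s \<le> 3"
  by (auto simp: emit_out_def)

lemma final_body:
  fixes f g :: "nat \<Rightarrow> real"
  assumes "emit \<in> {emit_store, emit_out}" "nr s 4 = 2" "nr s 7 = 100"
  defines "s' \<equiv> final f g (body emit) s"
    and "step \<equiv> g (nr s 3 + 2) - g (nr s 3) \<le> f (nr s 2 + 2) - f (nr s 2)"
  shows "cost f g (body emit) s \<le> 20"
    and "nr s' 1 = nr s 1 + 2"
    and "nr s' 2 = (if step then nr s 2 + 2 else nr s 2)"
    and "nr s' 3 = (if step then nr s 3 else nr s 3 + 2)"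
    and "nr s' 0 = nr s 0" "nr s' 4 = 2" "nr s' 5 = nr s 5" "nr s' 7 = 100"
  using assms(1) unfolding s'_def step_def
  by (elim insertE emptyE;
      simp add: assms(2,3) body_def final_emit_store final_emit_out
        le_trans[OF final_emit_store(3)] le_trans[OF final_emit_out(3)])+

lemma final_body_emit_store:
  fixes f g :: "nat \<Rightarrow> real"
  assumes "nr s 4 = 2" "nr s 7 = 100"
  defines "s' \<equiv> final f g (body emit_store) s"
  shows "rr s' (j + 100) = (if j = nr s 1 then f (nr s 2) + g (nr s 3) else rr s (j + 100))"
    and "outp s' = outp s"
  using assms by (simp_all add: body_def emit_store_def)

lemma final_body_emit_out:
  fixes f g :: "nat \<Rightarrow> real"
  assumes "nr s 4 = 2" "nr s 7 = 100"
  defines "s' \<equiv> final f g (body emit_out) s"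
  shows "rr s' (j + 100) = rr s (j + 100)"
    and "outp s' = (outp s)(nr s 1 := max (f (nr s 2) + g (nr s 3)) (rr s (nr s 1 + 100)))"
  using assms by (simp_all add: body_def emit_out_def max_def)

definition on_chain :: "nat \<Rightarrow> nat \<Rightarrow> nat \<Rightarrow> bool" where
  "on_chain p c k \<longleftrightarrow> p + c \<le> k \<and> even (k - (p + c))"

definition chain_regs :: "(nat \<Rightarrow> real) \<Rightarrow> (nat \<Rightarrow> real) \<Rightarrow> nat \<Rightarrow> nat \<Rightarrow> nat \<Rightarrow> mstate \<Rightarrow> bool" where
  "chain_regs f g n p c s \<longleftrightarrow>
     nr s 0 = n \<and> nr s 4 = 2 \<and> nr s 5 = n + 1 \<and> nr s 7 = 100 \<and> nr s 1 = nr s 2 + nr s 3 \<and>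
     (\<exists>u v. nr s 2 = p + 2 * u \<and> nr s 3 = c + 2 * v \<and>
        (nr s 1 \<le> n \<longrightarrow> merge_inv (\<lambda>u. f (p + 2 * u)) (\<lambda>v. g (c + 2 * v)) u v))"

lemma chain_regs_init:
  "nr s 0 = n \<Longrightarrow> chain_regs f g n p c (final f g (chain_init p c) s)"
  using final_chain_init[of f g p c s] unfolding chain_regs_def
  by (auto intro!: exI[of _ 0] merge_inv_0)

lemma chain_regs_value:
  assumes "chain_regs f g n p c s" "nr s 1 \<le> n" "concave2_arr n f" "concave2_arr n g"
    and "p \<in> {1, 2}" "c \<in> {0, 1}"
  shows "f (nr s 2) + g (nr s 3) = parity_conv f g c (nr s 1)" and "on_chain p c (nr s 1)"
proof -
  obtain u v where uv: "nr s 2 = p + 2 * u" "nr s 3 = c + 2 * v" "nr s 1 = nr s 2 + nr s 3"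
    and inv: "merge_inv (\<lambda>u. f (p + 2 * u)) (\<lambda>v. g (c + 2 * v)) u v"
    using assms(1,2) unfolding chain_regs_def by auto
  have "p + 2 * (u + v) \<le> n" "c + 2 * (u + v) \<le> n" using uv assms(2) by simp_all
  then have "f (p + 2 * a) + g (c + 2 * b) \<le> f (p + 2 * u) + g (c + 2 * v)" if "a + b = u + v" for a b
    using merge_inv_max[OF concave2_arr_subseq concave2_arr_subseq inv that] assms(3,4) by simp
  then show "f (nr s 2) + g (nr s 3) = parity_conv f g c (nr s 1)"
    using parity_conv_eqI[OF assms(5,6)] uv by simp
  show "on_chain p c (nr s 1)"
    using uv unfolding on_chain_def by simp
qed

lemma chain_regs_step:
  assumes "chain_regs f g n p c s" "nr s 1 \<le> n" "concave2_arr n f" "concave2_arr n g"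
    and "emit \<in> {emit_store, emit_out}"
  shows "chain_regs f g n p c (final f g (body emit) s)"
proof -
  let ?F = "\<lambda>u. f (p + 2 * u)" and ?G = "\<lambda>v. g (c + 2 * v)"
  obtain u v where uv: "nr s 2 = p + 2 * u" "nr s 3 = c + 2 * v" "nr s 1 = nr s 2 + nr s 3"
    and inv: "merge_inv ?F ?G u v"
    using assms(1,2) unfolding chain_regs_def by auto
  have regs: "nr s 4 = 2" "nr s 7 = 100" using assms(1) unfolding chain_regs_def by simp_all
  have slopes: "f (nr s 2 + 2) - f (nr s 2) = ?F (u + 1) - ?F u"
    "g (nr s 3 + 2) - g (nr s 3) = ?G (v + 1) - ?G v"
    using uv by (simp_all add: algebra_simps)
  let ?step = "?G (v + 1) - ?G v \<le> ?F (u + 1) - ?F u"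
  have "merge_inv ?F ?G (if ?step then u + 1 else u) (if ?step then v else v + 1)"
    if "nr s 1 + 2 \<le> n"
  proof (rule merge_inv_step[OF concave2_arr_subseq concave2_arr_subseq _ inv])
    show "p + 2 * (u + v + 1) \<le> n" "c + 2 * (u + v + 1) \<le> n" using that uv by simp_all
  qed (use assms(3,4) in simp_all)
  then show ?thesis
    using assms(1) uv final_body[OF assms(5) regs, of f g] slopes
    unfolding chain_regs_def
    by (intro conjI exI[of _ "if ?step then u + 1 else u"] exI[of _ "if ?step then v else v + 1"]) auto
qed

lemma on_chain_less_add2_iff:
  assumes "on_chain p c k" "on_chain p c j"
  shows "j < k + 2 \<longleftrightarrow> j \<le> k"
  using assms unfolding on_chain_def by presburger

lemma exec_chain:
  assumes "emit \<in> {emit_store, emit_out}" "nr s0 0 = n" "concave2_arr n f" "concave2_arr n g"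
    and J0: "J (final f g (chain_init p c) s0)"
    and J_step: "\<And>s. chain_regs f g n p c s \<Longrightarrow> nr s 1 \<le> n \<Longrightarrow> J s \<Longrightarrow> J (final f g (body emit) s)"
  shows "\<exists>t s. exec f g (chain p c emit) s0 t s \<and> t \<le> 21 * n + 50 \<and> nr s 0 = n \<and> n < nr s 1 \<and> J s"
proof -
  let ?I = "\<lambda>s. chain_regs f g n p c s \<and> J s" and ?\<mu> = "\<lambda>s. n + 2 - nr s 1"
  let ?s1 = "final f g (chain_init p c) s0"
  have loop_free: "loop_free (chain_init p c)" "loop_free (body emit)"
    using assms(1) by (auto simp: chain_init_def body_def emit_store_def emit_out_def)
  have step: "\<exists>t s'. exec f g (body emit) s t s' \<and> ?I s' \<and> t \<le> 20 \<and> ?\<mu> s' < ?\<mu> s"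
    if I: "?I s" and "eval_test (NLess 1 5) s" for s
  proof (intro exI conjI)
    have "nr s 1 \<le> n" "nr s 4 = 2" "nr s 7 = 100"
      using that unfolding chain_regs_def by auto
    note body = final_body[OF assms(1) this(2,3), of f g]
    show "exec f g (body emit) s (cost f g (body emit) s) (final f g (body emit) s)"
      using exec_final[OF loop_free(2)] .
    show "chain_regs f g n p c (final f g (body emit) s)"
      using chain_regs_step[OF _ \<open>nr s 1 \<le> n\<close> assms(3,4,1)] I by blast
    show "J (final f g (body emit) s)"
      using J_step \<open>nr s 1 \<le> n\<close> I by blast
    show "cost f g (body emit) s \<le> 20" using body(1) .
    show "?\<mu> (final f g (body emit) s) < ?\<mu> s" using body(2) \<open>nr s 1 \<le> n\<close> by simp
  qed
  have "?I ?s1" using chain_regs_init[OF assms(2)] J0 by blast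
  from exec_While_variant[where I = ?I and \<mu> = ?\<mu> and T = 20 and b = "NLess 1 5", OF step this]
  obtain t s where loop: "exec f g (While (NLess 1 5) (body emit)) ?s1 t s" "?I s"
      "\<not> eval_test (NLess 1 5) s" "t \<le> 21 * ?\<mu> ?s1 + 1"
    by auto
  have "exec f g (chain p c emit) s0 (7 + t) s"
    unfolding chain_def using exec_Seq[OF exec_final[OF loop_free(1)] loop(1)]
    by (simp add: final_chain_init)
  moreover have "7 + t \<le> 21 * n + 50" using loop(4) by simp
  moreover have "nr s 0 = n" "n < nr s 1" using loop(2,3) unfolding chain_regs_def by auto
  ultimately show ?thesis using loop(2) by blast
qed

lemma exec_chain_store:
  assumes "nr s0 0 = n" "concave2_arr n f" "concave2_arr n g" "p \<in> {1, 2}" "c \<in> {0, 1}"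
  shows "\<exists>t s. exec f g (chain p c emit_store) s0 t s \<and> t \<le> 21 * n + 50 \<and> nr s 0 = n \<and>
           outp s = outp s0 \<and>
           (\<forall>k. rr s (k + 100) =
                  (if on_chain p c k \<and> k \<le> n then parity_conv f g c k else rr s0 (k + 100)))"
proof -
  define J :: "mstate \<Rightarrow> bool" where "J s \<longleftrightarrow> outp s = outp s0 \<and>
    (\<forall>k. rr s (k + 100) =
           (if on_chain p c k \<and> k < nr s 1 \<and> k \<le> n then parity_conv f g c k else rr s0 (k + 100)))"
    for s
  have "J (final f g (chain_init p c) s0)"
    using final_chain_init[of f g p c s0] unfolding J_def on_chain_def by simp
  moreover have "J (final f g (body emit_store) s)"
    if "chain_regs f g n p c s" "nr s 1 \<le> n" "J s" for s
  proof -
    have "nr s 4 = 2" "nr s 7 = 100" using that(1) unfolding chain_regs_def by simp_all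
    note body = final_body[OF _ this, of emit_store f g] final_body_emit_store[OF this, of f g]
    note val = chain_regs_value[OF that(1,2) assms(2-5)]
    have "on_chain p c k \<and> k < nr s 1 + 2 \<longleftrightarrow> on_chain p c k \<and> k < nr s 1" if "k \<noteq> nr s 1" for k
      using on_chain_less_add2_iff[OF val(2)] that by auto
    then show ?thesis
      using that(2,3) body val unfolding J_def by auto
  qed
  ultimately obtain t s where "exec f g (chain p c emit_store) s0 t s" "t \<le> 21 * n + 50"
      "nr s 0 = n" "n < nr s 1" "J s"
    using exec_chain[of emit_store s0 n f g J] assms(1-3) by blast
  moreover have "k < nr s 1" if "k \<le> n" for k using \<open>n < nr s 1\<close> that by simp
  ultimately show ?thesis unfolding J_def by (intro exI[of _ t] exI[of _ s]) auto
qed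

lemma exec_chain_out:
  assumes "nr s0 0 = n" "concave2_arr n f" "concave2_arr n g" "p \<in> {1, 2}"
    and stored: "\<And>k. on_chain p 0 k \<Longrightarrow> k \<le> n \<Longrightarrow>
                   max (parity_conv f g 0 k) (rr s0 (k + 100)) = maxplus_conv f g k"
  shows "\<exists>t s. exec f g (chain p 0 emit_out) s0 t s \<and> t \<le> 21 * n + 50 \<and> nr s 0 = n \<and>
           (\<forall>k. rr s (k + 100) = rr s0 (k + 100)) \<and>
           (\<forall>k. outp s k = (if on_chain p 0 k \<and> k \<le> n then maxplus_conv f g k else outp s0 k))"
proof -
  define J :: "mstate \<Rightarrow> bool" where "J s \<longleftrightarrow> (\<forall>k. rr s (k + 100) = rr s0 (k + 100)) \<and>
    (\<forall>k. outp s k = (if on_chain p 0 k \<and> k < nr s 1 \<and> k \<le> n then maxplus_conv f g k else outp s0 k))"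
    for s
  have "J (final f g (chain_init p 0) s0)"
    using final_chain_init[of f g p 0 s0] unfolding J_def on_chain_def by simp
  moreover have "J (final f g (body emit_out) s)"
    if "chain_regs f g n p 0 s" "nr s 1 \<le> n" "J s" for s
  proof -
    have "nr s 4 = 2" "nr s 7 = 100" using that(1) unfolding chain_regs_def by simp_all
    note body = final_body[OF _ this, of emit_out f g] final_body_emit_out[OF this, of f g]
    note val = chain_regs_value[OF that(1,2) assms(2-4)]
    have "on_chain p 0 k \<and> k < nr s 1 + 2 \<longleftrightarrow> on_chain p 0 k \<and> k < nr s 1" if "k \<noteq> nr s 1" for k
      using on_chain_less_add2_iff[OF val(2)] that by auto
    then show ?thesis
      using that(2,3) body val stored[OF val(2) that(2)] unfolding J_def by auto
  qed
  ultimately obtain t s where "exec f g (chain p 0 emit_out) s0 t s" "t \<le> 21 * n + 50"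
      "nr s 0 = n" "n < nr s 1" "J s"
    using exec_chain[of emit_out s0 n f g J] assms(1-3) by blast
  moreover have "k < nr s 1" if "k \<le> n" for k using \<open>n < nr s 1\<close> that by simp
  ultimately show ?thesis unfolding J_def by (intro exI[of _ t] exI[of _ s]) auto
qed

section \<open>The complete program\<close>

text \<open>For k = 1 the class c = 1 is empty and parity_conv f g 1 1 is a junk value, so the memory
  cell of k = 1 is preset to f 1 + g 0, the only term of h 1.\<close>
definition init_k1 :: prog where
  "init_k1 = straight [NConst 2 1, ReadF 0 2, ReadG 1 3, RAdd 2 0 1, NConst 6 101, RStore 6 2]"

definition maxplus_prog :: prog where
  "maxplus_prog = Seq init_k1 (Seq (chain 1 1 emit_store) (Seq (chain 2 1 emit_store)
                    (Seq (chain 1 0 emit_out) (chain 2 0 emit_out))))"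

lemma final_init_k1:
  fixes f g :: "nat \<Rightarrow> real" and n :: nat
  defines "s' \<equiv> final f g init_k1 (init_state n)"
  shows "cost f g init_k1 (init_state n) = 6" and "nr s' 0 = n"
    and "rr s' (k + 100) = (if k = 1 then f 1 + g 0 else 0)"
  unfolding s'_def by (simp_all add: init_k1_def init_state_def)

lemma maxplus_prog_correct:
  assumes "concave_arr n f" "osc_concave_arr n g"
  shows "\<exists>t s. exec f g maxplus_prog (init_state n) t s \<and> t \<le> 210 * (n + 1) \<and>
           (\<forall>k \<in> {1..n}. outp s k = maxplus_conv f g k)"
proof -
  have conc: "concave2_arr n f" "concave2_arr n g"
    using assms concave_arr_imp_concave2_arr osc_concave_arr_imp_concave2_arr by blast+
  let ?s1 = "final f g init_k1 (init_state n)"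
  have "loop_free init_k1" by (simp add: init_k1_def)
  from exec_final[OF this, of f g "init_state n"]
  have init: "exec f g init_k1 (init_state n) 6 ?s1" unfolding final_init_k1(1) .
  obtain t2 s2 where 2: "exec f g (chain 1 1 emit_store) ?s1 t2 s2" "t2 \<le> 21 * n + 50" "nr s2 0 = n"
      "\<forall>k. rr s2 (k + 100) = (if on_chain 1 1 k \<and> k \<le> n then parity_conv f g 1 k else rr ?s1 (k + 100))"
    using exec_chain_store[OF final_init_k1(2)[of f g n] conc, of 1 1] by auto
  obtain t3 s3 where 3: "exec f g (chain 2 1 emit_store) s2 t3 s3" "t3 \<le> 21 * n + 50" "nr s3 0 = n"
      "\<forall>k. rr s3 (k + 100) = (if on_chain 2 1 k \<and> k \<le> n then parity_conv f g 1 k else rr s2 (k + 100))"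
    using exec_chain_store[OF 2(3) conc, of 2 1] by auto
  have stored: "max (parity_conv f g 0 k) (rr s3 (k + 100)) = maxplus_conv f g k"
    if "1 \<le> k" "k \<le> n" for k
  proof (cases "k = 1")
    case True
    have "rr s3 (k + 100) = f 1 + g 0"
      using spec[OF 2(4), of k] spec[OF 3(4), of k] final_init_k1(3)[of f g n k] True
      by (simp add: on_chain_def)
    then show ?thesis
      using True maxplus_conv_1[of f g] parity_conv_0_1[of f g] by simp
  next
    case False
    then have "on_chain 1 1 k \<or> on_chain 2 1 k" "2 \<le> k"
      using that unfolding on_chain_def by presburger+
    then show ?thesis
      using 2(4) 3(4) that maxplus_conv_parity_split by (auto simp: on_chain_def)
  qed
  obtain t4 s4 where 4: "exec f g (chain 1 0 emit_out) s3 t4 s4" "t4 \<le> 21 * n + 50" "nr s4 0 = n"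
      "\<forall>k. rr s4 (k + 100) = rr s3 (k + 100)"
      "\<forall>k. outp s4 k = (if on_chain 1 0 k \<and> k \<le> n then maxplus_conv f g k else outp s3 k)"
    using exec_chain_out[OF 3(3) conc, of 1] stored by (auto simp: on_chain_def)
  obtain t5 s5 where 5: "exec f g (chain 2 0 emit_out) s4 t5 s5" "t5 \<le> 21 * n + 50"
      "\<forall>k. outp s5 k = (if on_chain 2 0 k \<and> k \<le> n then maxplus_conv f g k else outp s4 k)"
    using exec_chain_out[OF 4(3) conc, of 2] stored 4(4) by (auto simp: on_chain_def)
  have "exec f g maxplus_prog (init_state n) (6 + (t2 + (t3 + (t4 + t5)))) s5"
    unfolding maxplus_prog_def
    by (rule exec_Seq[OF init exec_Seq[OF 2(1) exec_Seq[OF 3(1) exec_Seq[OF 4(1) 5(1)]]]])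
  moreover have "6 + (t2 + (t3 + (t4 + t5))) \<le> 210 * (n + 1)"
    using 2(2) 3(2) 4(2) 5(2) by simp
  moreover have "outp s5 k = maxplus_conv f g k" if "k \<in> {1..n}" for k
  proof -
    have "on_chain 1 0 k \<or> on_chain 2 0 k"
      using that unfolding on_chain_def by auto
    then show ?thesis using that 4(5) 5(3) by auto
  qed
  ultimately show ?thesis by blast
qed

theorem lemma6:
  shows "\<exists>(p :: prog) (C :: nat). \<forall>n (f :: nat \<Rightarrow> real) (g :: nat \<Rightarrow> real).
           concave_arr n f \<and> osc_concave_arr n g \<longrightarrow>
           (\<exists>t s. exec f g p (init_state n) t s \<and> t \<le> C * (n + 1) \<and>
                  (\<forall>k \<in> {1..n}. outp s k = maxplus_conv f g k))"
  using maxplus_prog_correct by blast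

end
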